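(* There exist constants $\epsilon_1'>0$, $\tau_1'>0$ and $C>0$, depending only on $\underline{U}=(1,0)^{\top}$ and $a_\infty$, such that the following holds for all $\tau\in(0,\tau_1')$ and all states $U_L,U_R$ in the $\epsilon_1'$-neighborhood of $\underline{U}$. (a) Let $k\in\{1,2\}$. If $U_R=\Phi(\beta_1,\beta_2;U_L)$ and $U_R=\Phi_k(\alpha_k;U_L,\tau^2)$, then $|\beta_j-\delta_{jk}\alpha_k|\le C|\alpha_k|\tau^2$ for $j=1,2$, where $\delta_{jk}$ is the Kronecker symbol. (b) If $U_R=\Phi(\beta_1,\beta_2;U_L)$ and $\alpha=|U_R-U_L|$, then $|\beta_j|\le C\alpha$ for $j=1,2$.
   Context: Fix $\gamma>1$ and $a_\infty>0$; states are $U=(\rho,v)^{\top}$. Velocity function. For $\tau>0$ let $$u(\rho,v;\tau^2)=\tau^{-2}\Big(-1+\sqrt{1-\tau^2\big(v^2+\tfrac{2(\rho^{\gamma-1}-1)}{(\gamma-1)a_\infty^2}\big)}\Big),$$ and let $u(\rho,v;0)=-\tfrac12v^2-\tfrac{\rho^{\gamma-1}-1}{(\gamma-1)a_\infty^2}$. Systems. Set $G(U,\tau^2)=(\rho(1+\tau^2u),v)^{\top}$ and $F(U,\tau^2)=(\rho v,-u)^{\top}$, and consider $\partial_xG(U,\tau^2)+\partial_yF(U,\tau^2)=0$. At $\tau=0$ this is $\partial_xU+\partial_yF(U,0)=0$ with $F(U,0)=(\rho v,\tfrac12v^2+\tfrac{\rho^{\gamma-1}-1}{(\gamma-1)a_\infty^2})^{\top}$.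 Near $\underline{U}$ and for small $\tau\ge0$ these systems are strictly hyperbolic, with characteristic speeds $\lambda_1<\lambda_2$ and genuinely nonlinear fields. Let $r_k(U,\tau^2)$ be the right eigenvectors, normalized by $\nabla_U\lambda_k\cdot r_k=1$. Wave curves. For $k=1,2$, $\alpha\mapsto\Phi_k(\alpha;U,\tau^2)$ denotes the $k$-th physically admissible wave curve through $U$: - it is the Lax shock curve for $\alpha<0$ and the rarefaction curve for $\alpha>0$; - it is $C^2$ in $(\alpha,U,\tau^2)$ near $(0,\underline{U},0)$; - $\Phi_k(0;U,\tau^2)=U$ and $\partial_\alpha\Phi_k(0;U,\tau^2)=r_k(U,\tau^2)$. For the $\tau=0$ system write $\Phi_k(\alpha;U):=\Phi_k(\alpha;U,0)$. Compositions: - $\Phi(\alpha_1,\alpha_2;U,\tau^2)=\Phi_2(\alpha_2;\Phi_1(\alpha_1;U,\tau^2),\tau^2)$; - $\Phi(\beta_1,\beta_2;U)=\Phi_2(\beta_2;\Phi_1(\beta_1;U))$. *)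

theory Defs
  imports "HOL-Analysis.Analysis"
begin

text \<open>States U = (rho, v) are modelled as pairs of reals.  The parameter s stands
  for tau^2.\<close>

definition Ubar :: "real \<times> real" where
  "Ubar = (1, 0)"

definition uvel :: "real \<Rightarrow> real \<Rightarrow> real \<times> real \<Rightarrow> real \<Rightarrow> real" where
  "uvel \<gamma> ainf U s =
     (let \<rho> = fst U; v = snd U;
          q = v^2 + 2 * (\<rho> powr (\<gamma> - 1) - 1) / ((\<gamma> - 1) * ainf^2)
      in if s = 0 then - (v^2) / 2 - (\<rho> powr (\<gamma> - 1) - 1) / ((\<gamma> - 1) * ainf^2)
         else (-1 + sqrt (1 - s * q)) / s)"

definition Gf :: "real \<Rightarrow> real \<Rightarrow> real \<times> real \<Rightarrow> real \<Rightarrow> real \<times> real" where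
  "Gf \<gamma> ainf U s = (fst U * (1 + s * uvel \<gamma> ainf U s), snd U)"

definition Ff :: "real \<Rightarrow> real \<Rightarrow> real \<times> real \<Rightarrow> real \<Rightarrow> real \<times> real" where
  "Ff \<gamma> ainf U s = (fst U * snd U, - uvel \<gamma> ainf U s)"

definition C2_on :: "'a::real_normed_vector set \<Rightarrow> ('a \<Rightarrow> 'b::real_normed_vector) \<Rightarrow> bool" where
  "C2_on D f \<longleftrightarrow> (\<exists>f' :: 'a \<Rightarrow> ('a \<Rightarrow>\<^sub>L 'b). \<exists>f'' :: 'a \<Rightarrow> ('a \<Rightarrow>\<^sub>L ('a \<Rightarrow>\<^sub>L 'b)).
      (\<forall>x\<in>D. (f has_derivative blinfun_apply (f' x)) (at x within D)
             \<and> (f' has_derivative blinfun_apply (f'' x)) (at x within D))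
      \<and> continuous_on D f'')"

definition WDom :: "real \<Rightarrow> (real \<times> (real \<times> real) \<times> real) set" where
  "WDom \<delta> = {(\<alpha>, U, s). \<bar>\<alpha>\<bar> < \<delta> \<and> dist U Ubar < \<delta> \<and> 0 \<le> s \<and> s < \<delta>}"

text \<open>Characteristic speeds lam k U s (k = 1,2) and right eigenvectors r k U s of the
  system  d_x G(U,s) + d_y F(U,s) = 0 :  DF r = lam DG r, r \<noteq> 0, lam_1 < lam_2
  (strict hyperbolicity), normalised by grad lam_k . r_k = 1 (genuine nonlinearity).\<close>
definition char_fields ::
  "real \<Rightarrow> real \<Rightarrow> real \<Rightarrow> (nat \<Rightarrow> real \<times> real \<Rightarrow> real \<Rightarrow> real)
     \<Rightarrow> (nat \<Rightarrow> real \<times> real \<Rightarrow> real \<Rightarrow> real \<times> real) \<Rightarrow> bool" where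
  "char_fields \<gamma> ainf \<delta> lam r \<longleftrightarrow>
     (\<forall>U s. dist U Ubar < \<delta> \<and> 0 \<le> s \<and> s < \<delta> \<longrightarrow>
        lam 1 U s < lam 2 U s \<and>
        (\<forall>k\<in>{1,2}. r k U s \<noteq> 0 \<and>
           (\<exists>DF DG Dl.
              ((\<lambda>V. Ff \<gamma> ainf V s) has_derivative DF) (at U) \<and>
              ((\<lambda>V. Gf \<gamma> ainf V s) has_derivative DG) (at U) \<and>
              ((\<lambda>V. lam k V s) has_derivative Dl) (at U) \<and>
              DF (r k U s) = lam k U s *\<^sub>R DG (r k U s) \<and>
              Dl (r k U s) = 1)))"

text \<open>Phi k alpha U s is the k-th physically admissible wave curve through U:
  C^2 in (alpha,U,s) near (0,Ubar,0); Phi_k(0)=U, d_alpha Phi_k(0)=r_k;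
  rarefaction (integral curve of r_k) for alpha > 0; Lax shock for alpha < 0.\<close>
definition wave_curves ::
  "real \<Rightarrow> real \<Rightarrow> real \<Rightarrow> (nat \<Rightarrow> real \<times> real \<Rightarrow> real \<Rightarrow> real)
     \<Rightarrow> (nat \<Rightarrow> real \<times> real \<Rightarrow> real \<Rightarrow> real \<times> real)
     \<Rightarrow> (nat \<Rightarrow> real \<Rightarrow> real \<times> real \<Rightarrow> real \<Rightarrow> real \<times> real) \<Rightarrow> bool" where
  "wave_curves \<gamma> ainf \<delta> lam r Phi \<longleftrightarrow>
     (\<forall>k\<in>{1,2}.
        C2_on (WDom \<delta>) (\<lambda>(\<alpha>, U, s). Phi k \<alpha> U s) \<and>
        (\<forall>U s. dist U Ubar < \<delta> \<and> 0 \<le> s \<and> s < \<delta> \<longrightarrow>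
           Phi k 0 U s = U \<and>
           ((\<lambda>\<alpha>. Phi k \<alpha> U s) has_vector_derivative r k U s) (at 0)) \<and>
        (\<forall>\<alpha> U s. (\<alpha>, U, s) \<in> WDom \<delta> \<and> 0 < \<alpha> \<and> dist (Phi k \<alpha> U s) Ubar < \<delta> \<longrightarrow>
           ((\<lambda>t. Phi k t U s) has_vector_derivative r k (Phi k \<alpha> U s) s) (at \<alpha>)) \<and>
        (\<forall>\<alpha> U s. (\<alpha>, U, s) \<in> WDom \<delta> \<and> \<alpha> < 0 \<and> dist (Phi k \<alpha> U s) Ubar < \<delta> \<longrightarrow>
           (\<exists>\<sigma>. \<sigma> *\<^sub>R (Gf \<gamma> ainf (Phi k \<alpha> U s) s - Gf \<gamma> ainf U s)
                   = Ff \<gamma> ainf (Phi k \<alpha> U s) s - Ff \<gamma> ainf U s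
                \<and> lam k (Phi k \<alpha> U s) s < \<sigma> \<and> \<sigma> < lam k U s)))"

definition Phi0 :: "(nat \<Rightarrow> real \<Rightarrow> real \<times> real \<Rightarrow> real \<Rightarrow> real \<times> real)
     \<Rightarrow> real \<Rightarrow> real \<Rightarrow> real \<times> real \<Rightarrow> real \<times> real" where
  "Phi0 Phi b1 b2 U = Phi 2 b2 (Phi 1 b1 U 0) 0"

end

theory Submission
  imports Defs
begin

(* At tau = 0 the flux G is the identity, so the tangents r_1, r_2 of the two wave curves at
   the base state are eigenvectors of DF for the distinct speeds lambda_1 < lambda_2, hence
   linearly independent.  Since both curves are C^1 with Phi_k(0; U) = U, the composite map
   (beta_1, beta_2) |-> Phi(beta_1, beta_2; U) is a uniform perturbation of the linear map
   (beta_1, beta_2) |-> beta_1 r_1 + beta_2 r_2 and therefore bi-Lipschitz near 0, uniformly in U.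
   With Phi(0, 0; U) = U this is (b).  For (a), Phi(alpha e_k; U) = Phi_k(alpha; U, 0), so the
   coordinate error is controlled by |Phi_k(alpha; U, tau^2) - Phi_k(alpha; U, 0)|; as
   Phi_k(0; U, s) = U for every s and the derivative of the C^2 map Phi_k is Lipschitz in s,
   this is at most L tau^2 |alpha|. *)

lemma norm_Pair_zero_le: "norm (a::real, w, 0::real) \<le> \<bar>a\<bar> + norm w"
  using norm_Pair_le[of a "(w, 0::real)"] by (simp add: norm_Pair)

lemma C2_on_derivative:
  assumes "C2_on D f"
  obtains F where "\<And>x. x \<in> D \<Longrightarrow> (f has_derivative blinfun_apply (F x)) (at x within D)"
    and "continuous_on D F"
    and "\<And>K. compact K \<Longrightarrow> convex K \<Longrightarrow> K \<subseteq> D \<Longrightarrow>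
           \<exists>L\<ge>0. \<forall>x\<in>K. \<forall>y\<in>K. norm (F x - F y) \<le> L * norm (x - y)"
proof -
  from assms obtain F F' where
    F: "\<And>x. x \<in> D \<Longrightarrow> (f has_derivative blinfun_apply (F x)) (at x within D)" and
    F': "\<And>x. x \<in> D \<Longrightarrow> (F has_derivative blinfun_apply (F' x)) (at x within D)" and
    cont: "continuous_on D F'"
    unfolding C2_on_def by blast
  have "\<exists>L\<ge>0. \<forall>x\<in>K. \<forall>y\<in>K. norm (F x - F y) \<le> L * norm (x - y)"
    if K: "compact K" "convex K" "K \<subseteq> D" for K
  proof -
    have "compact (F' ` K)"
      using compact_continuous_image[OF continuous_on_subset[OF cont \<open>K \<subseteq> D\<close>] \<open>compact K\<close>] .
    then obtain B where B: "\<And>x. x \<in> K \<Longrightarrow> norm (F' x) \<le> B"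
      by (meson compact_imp_bounded bounded_iff image_eqI)
    have "norm (F x - F y) \<le> max B 0 * norm (x - y)" if "x \<in> K" "y \<in> K" for x y
    proof (rule differentiable_bound[OF \<open>convex K\<close> _ _ that])
      show "(F has_derivative blinfun_apply (F' z)) (at z within K)" if "z \<in> K" for z
        using F'[of z] that K(3) by (auto intro: has_derivative_subset)
      show "onorm (blinfun_apply (F' z)) \<le> max B 0" if "z \<in> K" for z
        using B[OF that] by (simp add: norm_blinfun.rep_eq[symmetric])
    qed
    then show ?thesis by (intro exI[of _ "max B 0"]) auto
  qed
  with F has_derivative_continuous_on[OF F'] show ?thesis using that by blast
qed

lemma linearization_near_point:
  fixes f :: "'a::real_normed_vector \<Rightarrow> 'b::real_normed_vector"
  assumes "convex S" "x0 \<in> S"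
    and f: "\<And>x. x \<in> S \<Longrightarrow> (f has_derivative blinfun_apply (F x)) (at x within S)"
    and "continuous (at x0 within S) F" "e > 0"
  obtains \<rho> where "\<rho> > 0"
    "\<And>x y. x \<in> S \<Longrightarrow> y \<in> S \<Longrightarrow> dist x x0 < \<rho> \<Longrightarrow> dist y x0 < \<rho> \<Longrightarrow>
       norm (f x - f y - F x0 (x - y)) \<le> e * norm (x - y)"
proof -
  obtain \<rho> where "\<rho> > 0" and \<rho>: "\<And>x. x \<in> S \<Longrightarrow> dist x x0 < \<rho> \<Longrightarrow> dist (F x) (F x0) < e"
    using assms(4,5) unfolding continuous_within_eps_delta by blast
  define S' where "S' = S \<inter> ball x0 \<rho>"
  have "norm (f x - f y - F x0 (x - y)) \<le> e * norm (x - y)"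
    if "x \<in> S" "y \<in> S" "dist x x0 < \<rho>" "dist y x0 < \<rho>" for x y
  proof -
    have "norm (f x - f y - F x0 (x - y)) \<le> norm (x - y) * e"
    proof (rule differentiable_bound_linearization[of y x S'])
      have "convex S'" unfolding S'_def by (intro convex_Int \<open>convex S\<close> convex_ball)
      moreover have "x \<in> S'" "y \<in> S'" using that by (auto simp: S'_def dist_commute)
      ultimately show "y + t *\<^sub>R (x - y) \<in> S'" if "t \<in> {0..1}" for t
        using convexD_alt[of S' y x t] that by (simp add: algebra_simps)
      show "(f has_derivative blinfun_apply (F z)) (at z within S')" if "z \<in> S'" for z
        using f[of z] that by (auto simp: S'_def intro: has_derivative_subset)
      show "onorm (blinfun_apply (F z) - blinfun_apply (F x0)) \<le> e" if "z \<in> S'" for z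
        using \<rho>[of z] that
        by (auto simp: S'_def dist_norm norm_minus_commute norm_blinfun.rep_eq minus_blinfun.rep_eq fun_diff_def)
      show "x0 \<in> S'" using \<open>x0 \<in> S\<close> \<open>\<rho> > 0\<close> by (simp add: S'_def)
    qed
    then show ?thesis by (simp add: mult.commute)
  qed
  with \<open>\<rho> > 0\<close> show ?thesis using that by blast
qed

lemma has_derivative_compose_within_unique:
  assumes f: "(f has_derivative f') (at a within D)" and "g x = a"
    and g: "(g has_derivative g') (at x)"
    and "open T" "x \<in> T" "g ` T \<subseteq> D"
    and fg: "((\<lambda>y. f (g y)) has_derivative h) (at x)"
  shows "f' (g' v) = h v"
proof -
  have "(f has_derivative f') (at (g x) within g ` T)"
    using has_derivative_subset[OF f \<open>g ` T \<subseteq> D\<close>] \<open>g x = a\<close> by simp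
  from has_derivative_in_compose[OF has_derivative_at_withinI[OF g] this]
  have "((\<lambda>y. f (g y)) has_derivative (\<lambda>v. f' (g' v))) (at x within T)" .
  then have "((\<lambda>y. f (g y)) has_derivative (\<lambda>v. f' (g' v))) (at x)"
    using at_within_open[OF \<open>x \<in> T\<close> \<open>open T\<close>] by simp
  from has_derivative_unique[OF this fg] show ?thesis by metis
qed

lemma parameter_perturbation_bound:
  fixes f :: "real \<times> 'a::real_normed_vector \<times> real \<Rightarrow> 'b::real_normed_vector"
  assumes f: "\<And>x. x \<in> K \<Longrightarrow> (f has_derivative blinfun_apply (F x)) (at x within K)"
    and lip: "\<And>x y. x \<in> K \<Longrightarrow> y \<in> K \<Longrightarrow> norm (F x - F y) \<le> L * norm (x - y)"
    and seg: "\<And>t. t \<in> closed_segment 0 \<alpha> \<Longrightarrow> (t, U, s) \<in> K \<and> (t, U, 0) \<in> K"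
    and "f (0, U, s) = f (0, U, 0)" "L \<ge> 0"
  shows "norm (f (\<alpha>, U, s) - f (\<alpha>, U, 0)) \<le> L * \<bar>s\<bar> * \<bar>\<alpha>\<bar>"
proof -
  define \<phi> where "\<phi> t = f (t, U, s) - f (t, U, 0)" for t
  define \<phi>' where "\<phi>' t h = F (t, U, s) (h, 0, 0) - F (t, U, 0) (h, 0, 0)" for t h
  have "norm (\<phi> \<alpha> - \<phi> 0) \<le> L * \<bar>s\<bar> * norm (\<alpha> - 0)"
  proof (rule differentiable_bound[of "closed_segment 0 \<alpha>" \<phi> \<phi>'])
    show "(\<phi> has_derivative \<phi>' t) (at t within closed_segment 0 \<alpha>)"
      if t: "t \<in> closed_segment 0 \<alpha>" for t
    proof -
      have "((\<lambda>t. f (t, U, s')) has_derivative (\<lambda>h. F (t, U, s') (h, 0, 0)))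
              (at t within closed_segment 0 \<alpha>)" if "s' = s \<or> s' = 0" for s'
        using that seg t
        by (intro has_derivative_in_compose2[OF f, of "\<lambda>t. (t, U, s')", simplified])
           (auto intro!: derivative_eq_intros simp: zero_prod_def)
      then show ?thesis
        unfolding \<phi>_def \<phi>'_def by (auto intro: has_derivative_diff)
    qed
    show "onorm (\<phi>' t) \<le> L * \<bar>s\<bar>" if t: "t \<in> closed_segment 0 \<alpha>" for t
    proof (rule onorm_bound)
      fix h :: real
      have "norm (\<phi>' t h) = norm ((F (t, U, s) - F (t, U, 0)) (h, 0, 0))"
        by (simp add: \<phi>'_def blinfun.diff_left)
      also have "\<dots> \<le> norm (F (t, U, s) - F (t, U, 0)) * norm (h, 0::'a, 0::real)"
        by (rule norm_blinfun)
      also have "\<dots> \<le> L * \<bar>s\<bar> * norm h"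
        using lip[of "(t, U, s)" "(t, U, 0)"] seg[OF t] by (simp add: norm_Pair mult_right_mono)
      finally show "norm (\<phi>' t h) \<le> L * \<bar>s\<bar> * norm h" .
    qed (use \<open>L \<ge> 0\<close> in simp)
  qed auto
  then show ?thesis using \<open>f (0, U, s) = f (0, U, 0)\<close> by (simp add: \<phi>_def)
qed

lemma eigenvectors_independent:
  fixes r1 r2 :: "'a::real_vector"
  assumes "linear T" "T r1 = l1 *\<^sub>R r1" "T r2 = l2 *\<^sub>R r2" "l1 \<noteq> l2" "r1 \<noteq> 0" "r2 \<noteq> 0"
    and comb: "a *\<^sub>R r1 + b *\<^sub>R r2 = 0"
  shows "a = 0 \<and> b = 0"
proof -
  have "T (a *\<^sub>R r1 + b *\<^sub>R r2) - l1 *\<^sub>R (a *\<^sub>R r1 + b *\<^sub>R r2) = 0"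
    using comb linear_0[OF \<open>linear T\<close>] by simp
  then have "(b * (l2 - l1)) *\<^sub>R r2 = 0"
    using assms(1-3) by (simp add: linear_add linear_scale algebra_simps)
  then have "b = 0" using assms(4,6) by simp
  with comb assms(5) show ?thesis by simp
qed

lemma independent_pair_bounded_below:
  fixes r1 r2 :: "'a::euclidean_space"
  assumes "\<And>a b. a *\<^sub>R r1 + b *\<^sub>R r2 = 0 \<Longrightarrow> a = 0 \<and> b = 0"
  obtains c where "c > 0" "\<And>a b. c * (\<bar>a\<bar> + \<bar>b\<bar>) \<le> norm (a *\<^sub>R r1 + b *\<^sub>R r2)"
proof -
  define g where "g p = fst p *\<^sub>R r1 + snd p *\<^sub>R r2" for p :: "real \<times> real"
  have "linear g" unfolding g_def by (auto intro!: linearI simp: algebra_simps)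
  moreover have "inj g"
  proof (rule linear_inj_on_iff_eq_0[THEN iffD2, OF \<open>linear g\<close> subspace_UNIV], intro ballI impI)
    fix p assume "g p = 0"
    then show "p = 0" using assms[of "fst p" "snd p"] by (simp add: g_def prod_eq_iff)
  qed
  ultimately obtain B where "B > 0" and B: "\<And>p. B * norm p \<le> norm (g p)"
    by (metis linear_inj_bounded_below_pos)
  show ?thesis
  proof (rule that[of "B / 2"])
    fix a b
    have "\<bar>a\<bar> + \<bar>b\<bar> \<le> 2 * norm (a, b)"
      using norm_fst_le[of a b] norm_snd_le[of b a] by simp
    then have "B / 2 * (\<bar>a\<bar> + \<bar>b\<bar>) \<le> B * norm (a, b)"
      using \<open>B > 0\<close> by simp
    also have "\<dots> \<le> norm (a *\<^sub>R r1 + b *\<^sub>R r2)" using B[of "(a, b)"] by (simp add: g_def)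
    finally show "B / 2 * (\<bar>a\<bar> + \<bar>b\<bar>) \<le> norm (a *\<^sub>R r1 + b *\<^sub>R r2)" .
  qed (use \<open>B > 0\<close> in simp)
qed

lemma composition_lower_bound:
  fixes P P' Q Q' r1 r2 :: "'a::real_normed_vector"
  assumes E1: "norm (P - P' - d1 *\<^sub>R r1) \<le> e * \<bar>d1\<bar>"
    and E2: "norm (Q - Q' - (d2 *\<^sub>R r2 + (P - P'))) \<le> e * (\<bar>d2\<bar> + norm (P - P'))"
    and low: "c * (\<bar>d1\<bar> + \<bar>d2\<bar>) \<le> norm (d1 *\<^sub>R r1 + d2 *\<^sub>R r2)"
    and e: "0 \<le> e" "e \<le> 1" "e * (norm r1 + 2) \<le> c / 2"
  shows "c / 2 * (\<bar>d1\<bar> + \<bar>d2\<bar>) \<le> norm (Q - Q')"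
proof -
  have "norm (P - P') \<le> norm (P - P' - d1 *\<^sub>R r1) + norm (d1 *\<^sub>R r1)"
    by (metis add.commute norm_triangle_sub)
  also have "\<dots> \<le> \<bar>d1\<bar> * (norm r1 + 1)"
    using E1 mult_left_mono[OF e(2) abs_ge_zero[of d1]] by (simp add: algebra_simps)
  finally have PP: "norm (P - P') \<le> \<bar>d1\<bar> * (norm r1 + 1)" .
  have "d1 *\<^sub>R r1 + d2 *\<^sub>R r2 = (Q - Q') - (Q - Q' - (d2 *\<^sub>R r2 + (P - P'))) - (P - P' - d1 *\<^sub>R r1)"
    by (simp add: algebra_simps)
  then have "norm (d1 *\<^sub>R r1 + d2 *\<^sub>R r2) \<le> norm (Q - Q') + e * (\<bar>d2\<bar> + norm (P - P')) + e * \<bar>d1\<bar>"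
    using E1 E2 norm_triangle_ineq4 by (smt (verit, ccfv_threshold))
  also have "\<dots> \<le> norm (Q - Q') + e * (\<bar>d2\<bar> + \<bar>d1\<bar> * (norm r1 + 1)) + e * \<bar>d1\<bar>"
    using PP e by (simp add: mult_left_mono)
  also have "\<dots> \<le> norm (Q - Q') + e * (norm r1 + 2) * (\<bar>d1\<bar> + \<bar>d2\<bar>)"
    using e by (simp add: algebra_simps mult_left_mono)
  also have "\<dots> \<le> norm (Q - Q') + c / 2 * (\<bar>d1\<bar> + \<bar>d2\<bar>)"
    using mult_right_mono[OF e(3), of "\<bar>d1\<bar> + \<bar>d2\<bar>"] by simp
  finally show ?thesis using low by simp
qed

lemma WDom_eq_Times: "WDom \<delta> = {-\<delta><..<\<delta>} \<times> ball Ubar \<delta> \<times> {0..<\<delta>}"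
  by (auto simp: WDom_def dist_commute abs_less_iff)

lemma convex_WDom: "convex (WDom \<delta>)"
  unfolding WDom_eq_Times by (intro convex_Times convex_ball convex_real_interval)

lemma wave_curvesD:
  assumes "wave_curves \<gamma> ainf \<delta> lam r Phi" "k \<in> {1, 2}"
  shows "C2_on (WDom \<delta>) (\<lambda>(\<alpha>, U, s). Phi k \<alpha> U s)"
    and "dist U Ubar < \<delta> \<Longrightarrow> 0 \<le> s \<Longrightarrow> s < \<delta> \<Longrightarrow> Phi k 0 U s = U"
    and "dist U Ubar < \<delta> \<Longrightarrow> 0 \<le> s \<Longrightarrow> s < \<delta> \<Longrightarrow>
           ((\<lambda>\<alpha>. Phi k \<alpha> U s) has_vector_derivative r k U s) (at 0)"
  using assms unfolding wave_curves_def by blast+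

lemma wave_curve_derivative_at_base:
  assumes "\<delta> > 0" "wave_curves \<gamma> ainf \<delta> lam r Phi" "k \<in> {1, 2}"
    and F: "((\<lambda>(\<alpha>, U, s). Phi k \<alpha> U s) has_derivative F) (at (0, Ubar, 0) within WDom \<delta>)"
  shows "F (h, w, 0) = h *\<^sub>R r k Ubar 0 + w"
proof -
  have base: "Phi k 0 U 0 = U" if "dist U Ubar < \<delta>" for U
    using wave_curvesD(2)[OF assms(2,3) that] \<open>\<delta> > 0\<close> by simp
  have "((\<lambda>\<alpha>. Phi k \<alpha> Ubar 0) has_vector_derivative r k Ubar 0) (at 0)"
    using wave_curvesD(3)[OF assms(2,3)] \<open>\<delta> > 0\<close> by simp
  then have "((\<lambda>t. (\<lambda>(\<alpha>, U, s). Phi k \<alpha> U s) (t, Ubar, 0::real))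
               has_derivative (\<lambda>h. h *\<^sub>R r k Ubar 0)) (at 0)"
    by (simp add: has_vector_derivative_def)
  moreover have "((\<lambda>t. (t, Ubar, 0::real)) has_derivative (\<lambda>h. (h, 0, 0))) (at 0)"
    by (auto intro!: derivative_eq_intros simp: zero_prod_def)
  moreover have "(\<lambda>t. (t, Ubar, 0::real)) ` ball 0 \<delta> \<subseteq> WDom \<delta>"
    using \<open>\<delta> > 0\<close> by (auto simp: WDom_def)
  ultimately have along_alpha: "F (h, 0, 0) = h *\<^sub>R r k Ubar 0"
    using has_derivative_compose_within_unique[where g="\<lambda>t. (t, Ubar, 0)" and x=0 and T="ball 0 \<delta>", OF F]
      \<open>\<delta> > 0\<close> by simp
  have "((\<lambda>V. (\<lambda>(\<alpha>, U, s). Phi k \<alpha> U s) (0::real, V, 0::real)) has_derivative (\<lambda>w. w)) (at Ubar)"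
    by (rule has_derivative_transform_within_open[OF has_derivative_ident open_ball[of Ubar \<delta>]])
       (use \<open>\<delta> > 0\<close> base in \<open>auto simp: dist_commute\<close>)
  moreover have "((\<lambda>V. (0::real, V, 0::real)) has_derivative (\<lambda>w. (0, w, 0))) (at Ubar)"
    by (auto intro!: derivative_eq_intros simp: zero_prod_def)
  moreover have "(\<lambda>V. (0::real, V, 0::real)) ` ball Ubar \<delta> \<subseteq> WDom \<delta>"
    using \<open>\<delta> > 0\<close> by (auto simp: WDom_def dist_commute)
  ultimately have along_U: "F (0, w, 0) = w"
    using has_derivative_compose_within_unique[where g="\<lambda>V. (0, V, 0)" and x=Ubar and T="ball Ubar \<delta>", OF F]
      \<open>\<delta> > 0\<close> by simp
  have "linear F" using F by (rule has_derivative_linear)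
  moreover have "(h, w, 0::real) = (h, 0, 0) + (0, w, 0)" by simp
  ultimately have "F (h, w, 0) = F (h, 0, 0) + F (0, w, 0)" by (metis linear_add)
  with along_alpha along_U show ?thesis by simp
qed

lemma base_slice_near:
  assumes "\<bar>a\<bar> < min (d / 2) \<delta>" "dist V Ubar < min (d / 2) \<delta>"
  shows "(a, V, 0::real) \<in> WDom \<delta>" "dist (a, V, 0::real) (0, Ubar, 0) < d"
proof -
  have "dist (a, V, 0::real) (0, Ubar, 0) \<le> \<bar>a\<bar> + dist V Ubar"
    using norm_Pair_zero_le[of a "V - Ubar"] by (simp add: dist_norm)
  with assms show "(a, V, 0::real) \<in> WDom \<delta>" "dist (a, V, 0::real) (0, Ubar, 0) < d"
    by (auto simp: WDom_def)
qed

lemma wave_curve_linearization: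
  assumes "\<delta> > 0" "wave_curves \<gamma> ainf \<delta> lam r Phi" "k \<in> {1, 2}" "e > 0"
  obtains \<rho> where "\<rho> > 0"
    "\<And>a V a' V'. \<bar>a\<bar> < \<rho> \<Longrightarrow> \<bar>a'\<bar> < \<rho> \<Longrightarrow> dist V Ubar < \<rho> \<Longrightarrow> dist V' Ubar < \<rho> \<Longrightarrow>
       norm (Phi k a V 0 - Phi k a' V' 0 - ((a - a') *\<^sub>R r k Ubar 0 + (V - V')))
         \<le> e * (\<bar>a - a'\<bar> + norm (V - V'))"
proof -
  define f where "f = (\<lambda>(\<alpha>, U, s). Phi k \<alpha> U s)"
  define x0 where "x0 = (0::real, Ubar, 0::real)"
  obtain F where F: "\<And>x. x \<in> WDom \<delta> \<Longrightarrow> (f has_derivative blinfun_apply (F x)) (at x within WDom \<delta>)"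
    and "continuous_on (WDom \<delta>) F"
    by (rule C2_on_derivative[OF wave_curvesD(1)[OF assms(2,3)], folded f_def]) (rule that)
  have x0: "x0 \<in> WDom \<delta>" using \<open>\<delta> > 0\<close> by (simp add: x0_def WDom_def)
  with \<open>continuous_on (WDom \<delta>) F\<close> have cont_x0: "continuous (at x0 within WDom \<delta>) F"
    by (simp add: continuous_on_eq_continuous_within)
  obtain \<rho>0 where "\<rho>0 > 0" and lin: "\<And>x y. x \<in> WDom \<delta> \<Longrightarrow> y \<in> WDom \<delta> \<Longrightarrow>
      dist x x0 < \<rho>0 \<Longrightarrow> dist y x0 < \<rho>0 \<Longrightarrow> norm (f x - f y - F x0 (x - y)) \<le> e * norm (x - y)"
    using linearization_near_point[OF convex_WDom x0 _ cont_x0 \<open>e > 0\<close>] F by metis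
  have F0: "F x0 (h, w, 0) = h *\<^sub>R r k Ubar 0 + w" for h w
    using wave_curve_derivative_at_base[OF assms(1-3) F[OF x0, unfolded f_def x0_def]]
    by (simp add: x0_def)
  define \<rho> where "\<rho> = min (\<rho>0 / 2) \<delta>"
  show ?thesis
  proof (rule that)
    show "\<rho> > 0" using \<open>\<rho>0 > 0\<close> \<open>\<delta> > 0\<close> by (simp add: \<rho>_def)
    fix a V a' V'
    assume "\<bar>a\<bar> < \<rho>" "\<bar>a'\<bar> < \<rho>" "dist V Ubar < \<rho>" "dist V' Ubar < \<rho>"
    then have "(a, V, 0) \<in> WDom \<delta>" "dist (a, V, 0) x0 < \<rho>0"
      "(a', V', 0) \<in> WDom \<delta>" "dist (a', V', 0) x0 < \<rho>0"
      using base_slice_near unfolding \<rho>_def x0_def by blast+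
    with lin have "norm (f (a, V, 0) - f (a', V', 0) - F x0 ((a, V, 0) - (a', V', 0)))
        \<le> e * norm ((a, V, 0) - (a', V', 0::real))"
      by blast
    also have "\<dots> \<le> e * (\<bar>a - a'\<bar> + norm (V - V'))"
      using norm_Pair_zero_le \<open>e > 0\<close> by (simp add: mult_left_mono)
    finally show "norm (Phi k a V 0 - Phi k a' V' 0 - ((a - a') *\<^sub>R r k Ubar 0 + (V - V')))
        \<le> e * (\<bar>a - a'\<bar> + norm (V - V'))"
      by (simp add: f_def F0)
  qed
qed

lemma wave_curve_stays_near:
  assumes "\<delta> > 0" "wave_curves \<gamma> ainf \<delta> lam r Phi" "k \<in> {1, 2}" "e > 0"
  obtains \<epsilon> where "\<epsilon> > 0"
    "\<And>a V. \<bar>a\<bar> < \<epsilon> \<Longrightarrow> dist V Ubar < \<epsilon> \<Longrightarrow> dist (Phi k a V 0) Ubar < e"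
proof -
  define f where "f = (\<lambda>(\<alpha>, U, s). Phi k \<alpha> U s)"
  obtain F where "\<And>x. x \<in> WDom \<delta> \<Longrightarrow> (f has_derivative blinfun_apply (F x)) (at x within WDom \<delta>)"
    by (rule C2_on_derivative[OF wave_curvesD(1)[OF assms(2,3)], folded f_def]) (rule that)
  then have cont: "continuous_on (WDom \<delta>) f" by (rule has_derivative_continuous_on)
  have x0: "(0, Ubar, 0) \<in> WDom \<delta>" using \<open>\<delta> > 0\<close> by (simp add: WDom_def)
  have f0: "f (0, Ubar, 0) = Ubar"
    using wave_curvesD(2)[OF assms(2,3)] \<open>\<delta> > 0\<close> by (simp add: f_def)
  obtain d where "d > 0" and
    d: "\<forall>x\<in>WDom \<delta>. dist x (0, Ubar, 0) < d \<longrightarrow> dist (f x) (f (0, Ubar, 0)) < e"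
    using cont x0 \<open>e > 0\<close> unfolding continuous_on_iff by blast
  show ?thesis
  proof (rule that)
    show "min (d / 2) \<delta> > 0" using \<open>d > 0\<close> \<open>\<delta> > 0\<close> by simp
    fix a V assume "\<bar>a\<bar> < min (d / 2) \<delta>" "dist V Ubar < min (d / 2) \<delta>"
    from d[rule_format, OF base_slice_near[OF this]] f0
    show "dist (Phi k a V 0) Ubar < e" by (simp add: f_def)
  qed
qed

lemma Gf_at_zero: "Gf \<gamma> ainf V 0 = V"
  by (simp add: Gf_def)

lemma char_fields_at_base:
  assumes "\<delta> > 0" "char_fields \<gamma> ainf \<delta> lam r" "k \<in> {1, 2}"
  shows "lam 1 Ubar 0 < lam 2 Ubar 0" "r k Ubar 0 \<noteq> 0"
    and "\<exists>DF DG. ((\<lambda>V. Ff \<gamma> ainf V 0) has_derivative DF) (at Ubar)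
            \<and> ((\<lambda>V. Gf \<gamma> ainf V 0) has_derivative DG) (at Ubar)
            \<and> DF (r k Ubar 0) = lam k Ubar 0 *\<^sub>R DG (r k Ubar 0)"
proof -
  have "dist Ubar Ubar < \<delta> \<and> 0 \<le> (0::real) \<and> 0 < \<delta>" using assms(1) by simp
  with assms(2) have cf: "lam 1 Ubar 0 < lam 2 Ubar 0 \<and> (\<forall>k\<in>{1,2}. r k Ubar 0 \<noteq> 0 \<and>
           (\<exists>DF DG Dl.
              ((\<lambda>V. Ff \<gamma> ainf V 0) has_derivative DF) (at Ubar) \<and>
              ((\<lambda>V. Gf \<gamma> ainf V 0) has_derivative DG) (at Ubar) \<and>
              ((\<lambda>V. lam k V 0) has_derivative Dl) (at Ubar) \<and>
              DF (r k Ubar 0) = lam k Ubar 0 *\<^sub>R DG (r k Ubar 0) \<and> Dl (r k Ubar 0) = 1))"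
    unfolding char_fields_def by blast
  then show "lam 1 Ubar 0 < lam 2 Ubar 0" "r k Ubar 0 \<noteq> 0" using assms(3) by blast+
  from cf assms(3) show "\<exists>DF DG. ((\<lambda>V. Ff \<gamma> ainf V 0) has_derivative DF) (at Ubar)
            \<and> ((\<lambda>V. Gf \<gamma> ainf V 0) has_derivative DG) (at Ubar)
            \<and> DF (r k Ubar 0) = lam k Ubar 0 *\<^sub>R DG (r k Ubar 0)"
    by blast
qed

lemma base_eigenvectors_bounded_below:
  assumes "\<delta> > 0" "char_fields \<gamma> ainf \<delta> lam r"
  obtains c where "c > 0"
    "\<And>a b. c * (\<bar>a\<bar> + \<bar>b\<bar>) \<le> norm (a *\<^sub>R r 1 Ubar 0 + b *\<^sub>R r 2 Ubar 0)"
proof -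
  have eig: "\<exists>DF. ((\<lambda>V. Ff \<gamma> ainf V 0) has_derivative DF) (at Ubar)
                \<and> DF (r k Ubar 0) = lam k Ubar 0 *\<^sub>R r k Ubar 0"
    if k: "k \<in> {1, 2}" for k
  proof -
    obtain DF DG where DF: "((\<lambda>V. Ff \<gamma> ainf V 0) has_derivative DF) (at Ubar)"
      and DG: "((\<lambda>V. Gf \<gamma> ainf V 0) has_derivative DG) (at Ubar)"
      and "DF (r k Ubar 0) = lam k Ubar 0 *\<^sub>R DG (r k Ubar 0)"
      using char_fields_at_base(3)[OF assms k] by blast
    moreover have "DG = (\<lambda>V. V)"
      using has_derivative_unique[OF DG] has_derivative_ident by (simp add: Gf_at_zero)
    ultimately show ?thesis by auto
  qed
  obtain DF1 where DF1: "((\<lambda>V. Ff \<gamma> ainf V 0) has_derivative DF1) (at Ubar)"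
    and eig1: "DF1 (r 1 Ubar 0) = lam 1 Ubar 0 *\<^sub>R r 1 Ubar 0"
    using eig[of 1] by auto
  obtain DF2 where DF2: "((\<lambda>V. Ff \<gamma> ainf V 0) has_derivative DF2) (at Ubar)"
    and eig2: "DF2 (r 2 Ubar 0) = lam 2 Ubar 0 *\<^sub>R r 2 Ubar 0"
    using eig[of 2] by auto
  have "DF2 = DF1" by (rule has_derivative_unique[OF DF2 DF1])
  have "a = 0 \<and> b = 0" if "a *\<^sub>R r 1 Ubar 0 + b *\<^sub>R r 2 Ubar 0 = 0" for a b
  proof (rule eigenvectors_independent[OF has_derivative_linear[OF DF1] eig1 _ _ _ _ that])
    show "DF1 (r 2 Ubar 0) = lam 2 Ubar 0 *\<^sub>R r 2 Ubar 0" using eig2 \<open>DF2 = DF1\<close> by simp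
  qed (use char_fields_at_base(1,2)[OF assms, of 1] char_fields_at_base(2)[OF assms, of 2] in auto)
  from independent_pair_bounded_below[OF this] that show ?thesis by blast
qed

lemma composite_wave_curve_inverse_lipschitz:
  assumes "\<delta> > 0" "char_fields \<gamma> ainf \<delta> lam r" "wave_curves \<gamma> ainf \<delta> lam r Phi"
  obtains \<epsilon> c where "\<epsilon> > 0" "c > 0"
    "\<And>U b1 b2 b1' b2'. dist U Ubar < \<epsilon> \<Longrightarrow> \<bar>b1\<bar> < \<epsilon> \<Longrightarrow> \<bar>b2\<bar> < \<epsilon> \<Longrightarrow>
       \<bar>b1'\<bar> < \<epsilon> \<Longrightarrow> \<bar>b2'\<bar> < \<epsilon> \<Longrightarrow>
       c * (\<bar>b1 - b1'\<bar> + \<bar>b2 - b2'\<bar>) \<le> norm (Phi0 Phi b1 b2 U - Phi0 Phi b1' b2' U)"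
proof -
  obtain c0 where "c0 > 0" and
    low: "\<And>a b. c0 * (\<bar>a\<bar> + \<bar>b\<bar>) \<le> norm (a *\<^sub>R r 1 Ubar 0 + b *\<^sub>R r 2 Ubar 0)"
    using base_eigenvectors_bounded_below[OF assms(1,2)] by blast
  define N where "N = norm (r 1 Ubar 0)"
  define e where "e = min 1 (c0 / (2 * (N + 2)))"
  have "N \<ge> 0" by (simp add: N_def)
  have e: "0 < e" "e \<le> 1" "e * (N + 2) \<le> c0 / 2"
  proof -
    show "0 < e" "e \<le> 1" using \<open>c0 > 0\<close> \<open>N \<ge> 0\<close> by (simp_all add: e_def)
    have "e * (N + 2) \<le> c0 / (2 * (N + 2)) * (N + 2)"
      using \<open>N \<ge> 0\<close> by (intro mult_right_mono) (auto simp: e_def)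
    also have "\<dots> = c0 / 2" using \<open>N \<ge> 0\<close> by (simp add: field_simps)
    finally show "e * (N + 2) \<le> c0 / 2" .
  qed
  obtain \<rho>1 where "\<rho>1 > 0" and lin1: "\<And>a V a' V'. \<bar>a\<bar> < \<rho>1 \<Longrightarrow> \<bar>a'\<bar> < \<rho>1 \<Longrightarrow>
      dist V Ubar < \<rho>1 \<Longrightarrow> dist V' Ubar < \<rho>1 \<Longrightarrow>
      norm (Phi 1 a V 0 - Phi 1 a' V' 0 - ((a - a') *\<^sub>R r 1 Ubar 0 + (V - V')))
        \<le> e * (\<bar>a - a'\<bar> + norm (V - V'))"
    using wave_curve_linearization[OF assms(1,3) _ \<open>e > 0\<close>, of 1] by auto
  obtain \<rho>2 where "\<rho>2 > 0" and lin2: "\<And>a V a' V'. \<bar>a\<bar> < \<rho>2 \<Longrightarrow> \<bar>a'\<bar> < \<rho>2 \<Longrightarrow>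
      dist V Ubar < \<rho>2 \<Longrightarrow> dist V' Ubar < \<rho>2 \<Longrightarrow>
      norm (Phi 2 a V 0 - Phi 2 a' V' 0 - ((a - a') *\<^sub>R r 2 Ubar 0 + (V - V')))
        \<le> e * (\<bar>a - a'\<bar> + norm (V - V'))"
    using wave_curve_linearization[OF assms(1,3) _ \<open>e > 0\<close>, of 2] by auto
  obtain \<epsilon>1 where "\<epsilon>1 > 0" and
    near: "\<And>a V. \<bar>a\<bar> < \<epsilon>1 \<Longrightarrow> dist V Ubar < \<epsilon>1 \<Longrightarrow> dist (Phi 1 a V 0) Ubar < \<rho>2"
    using wave_curve_stays_near[OF assms(1,3) _ \<open>\<rho>2 > 0\<close>, of 1] by auto
  define \<epsilon> where "\<epsilon> = min \<epsilon>1 (min \<rho>1 \<rho>2)"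
  show ?thesis
  proof (rule that[of \<epsilon> "c0 / 2"])
    show "\<epsilon> > 0" "c0 / 2 > 0"
      using \<open>\<epsilon>1 > 0\<close> \<open>\<rho>1 > 0\<close> \<open>\<rho>2 > 0\<close> \<open>c0 > 0\<close> by (auto simp: \<epsilon>_def)
    fix U b1 b2 b1' b2'
    assume small: "dist U Ubar < \<epsilon>" "\<bar>b1\<bar> < \<epsilon>" "\<bar>b2\<bar> < \<epsilon>" "\<bar>b1'\<bar> < \<epsilon>" "\<bar>b2'\<bar> < \<epsilon>"
    define P where "P = Phi 1 b1 U 0"
    define P' where "P' = Phi 1 b1' U 0"
    have "norm (P - P' - (b1 - b1') *\<^sub>R r 1 Ubar 0) \<le> e * \<bar>b1 - b1'\<bar>"
      using lin1[of b1 b1' U U] small by (simp add: P_def P'_def \<epsilon>_def)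
    moreover have "norm (Phi 2 b2 P 0 - Phi 2 b2' P' 0 - ((b2 - b2') *\<^sub>R r 2 Ubar 0 + (P - P')))
        \<le> e * (\<bar>b2 - b2'\<bar> + norm (P - P'))"
      using lin2 near small unfolding P_def P'_def \<epsilon>_def by simp
    ultimately have "c0 / 2 * (\<bar>b1 - b1'\<bar> + \<bar>b2 - b2'\<bar>) \<le> norm (Phi 2 b2 P 0 - Phi 2 b2' P' 0)"
      by (rule composition_lower_bound[OF _ _ low]) (use e in \<open>auto simp: N_def\<close>)
    then show "c0 / 2 * (\<bar>b1 - b1'\<bar> + \<bar>b2 - b2'\<bar>) \<le> norm (Phi0 Phi b1 b2 U - Phi0 Phi b1' b2' U)"
      by (simp add: Phi0_def P_def P'_def)
  qed
qed

lemma wave_curve_tau_lipschitz: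
  assumes "\<delta> > 0" "wave_curves \<gamma> ainf \<delta> lam r Phi" "k \<in> {1, 2}"
  obtains L where "L \<ge> 0"
    "\<And>\<alpha> U s. \<bar>\<alpha>\<bar> \<le> \<delta> / 2 \<Longrightarrow> dist U Ubar \<le> \<delta> / 2 \<Longrightarrow> 0 \<le> s \<Longrightarrow> s \<le> \<delta> / 2 \<Longrightarrow>
       norm (Phi k \<alpha> U s - Phi k \<alpha> U 0) \<le> L * s * \<bar>\<alpha>\<bar>"
proof -
  define \<eta> where "\<eta> = \<delta> / 2"
  define K where "K = {-\<eta>..\<eta>} \<times> cball Ubar \<eta> \<times> {0..\<eta>}"
  have K: "compact K" "convex K" "K \<subseteq> WDom \<delta>"
    using \<open>\<delta> > 0\<close> unfolding K_def \<eta>_def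
    by (auto intro!: compact_Times convex_Times simp: WDom_def dist_commute)
  define f where "f = (\<lambda>(\<alpha>, U, s). Phi k \<alpha> U s)"
  obtain F where F: "\<And>x. x \<in> WDom \<delta> \<Longrightarrow> (f has_derivative blinfun_apply (F x)) (at x within WDom \<delta>)"
    and "\<And>K. compact K \<Longrightarrow> convex K \<Longrightarrow> K \<subseteq> WDom \<delta> \<Longrightarrow>
           \<exists>L\<ge>0. \<forall>x\<in>K. \<forall>y\<in>K. norm (F x - F y) \<le> L * norm (x - y)"
    by (rule C2_on_derivative[OF wave_curvesD(1)[OF assms(2,3)], folded f_def]) (rule that)
  with K obtain L where "L \<ge> 0" and lip: "\<forall>x\<in>K. \<forall>y\<in>K. norm (F x - F y) \<le> L * norm (x - y)"
    by blast
  show ?thesis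
  proof (rule that[OF \<open>L \<ge> 0\<close>])
    fix \<alpha> U s
    assume small: "\<bar>\<alpha>\<bar> \<le> \<delta> / 2" "dist U Ubar \<le> \<delta> / 2" "0 \<le> s" "s \<le> \<delta> / 2"
    have "norm (f (\<alpha>, U, s) - f (\<alpha>, U, 0)) \<le> L * \<bar>s\<bar> * \<bar>\<alpha>\<bar>"
    proof (rule parameter_perturbation_bound[where K = K and F = F])
      show "(f has_derivative blinfun_apply (F x)) (at x within K)" if "x \<in> K" for x
        using F[of x] that K(3) by (auto intro: has_derivative_subset)
      show "\<And>t. t \<in> closed_segment 0 \<alpha> \<Longrightarrow> (t, U, s) \<in> K \<and> (t, U, 0) \<in> K"
        using small by (auto simp: K_def \<eta>_def closed_segment_eq_real_ivl dist_commute split: if_splits)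
      show "f (0, U, s) = f (0, U, 0)"
        using wave_curvesD(2)[OF assms(2,3)] small \<open>\<delta> > 0\<close> by (simp add: f_def)
    qed (use lip \<open>L \<ge> 0\<close> in auto)
    with \<open>0 \<le> s\<close> show "norm (Phi k \<alpha> U s - Phi k \<alpha> U 0) \<le> L * s * \<bar>\<alpha>\<bar>"
      by (simp add: f_def)
  qed
qed

lemma wave_curves_tau_lipschitz:
  assumes "\<delta> > 0" "wave_curves \<gamma> ainf \<delta> lam r Phi"
  obtains L where "L \<ge> 0"
    "\<And>k \<alpha> U s. k \<in> {1, 2} \<Longrightarrow> \<bar>\<alpha>\<bar> \<le> \<delta> / 2 \<Longrightarrow> dist U Ubar \<le> \<delta> / 2 \<Longrightarrow> 0 \<le> s \<Longrightarrow>
       s \<le> \<delta> / 2 \<Longrightarrow> norm (Phi k \<alpha> U s - Phi k \<alpha> U 0) \<le> L * s * \<bar>\<alpha>\<bar>"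
proof -
  obtain L1 where "L1 \<ge> 0" and L1: "\<And>\<alpha> U s. \<bar>\<alpha>\<bar> \<le> \<delta> / 2 \<Longrightarrow> dist U Ubar \<le> \<delta> / 2 \<Longrightarrow>
      0 \<le> s \<Longrightarrow> s \<le> \<delta> / 2 \<Longrightarrow> norm (Phi 1 \<alpha> U s - Phi 1 \<alpha> U 0) \<le> L1 * s * \<bar>\<alpha>\<bar>"
    using wave_curve_tau_lipschitz[OF assms, of 1] by auto
  obtain L2 where "L2 \<ge> 0" and L2: "\<And>\<alpha> U s. \<bar>\<alpha>\<bar> \<le> \<delta> / 2 \<Longrightarrow> dist U Ubar \<le> \<delta> / 2 \<Longrightarrow>
      0 \<le> s \<Longrightarrow> s \<le> \<delta> / 2 \<Longrightarrow> norm (Phi 2 \<alpha> U s - Phi 2 \<alpha> U 0) \<le> L2 * s * \<bar>\<alpha>\<bar>"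
    using wave_curve_tau_lipschitz[OF assms, of 2] by auto
  show ?thesis
  proof (rule that[of "max L1 L2"])
    show "max L1 L2 \<ge> 0" using \<open>L1 \<ge> 0\<close> by simp
    fix k :: nat and \<alpha> U s
    assume k: "k \<in> {1, 2}"
      and small: "\<bar>\<alpha>\<bar> \<le> \<delta> / 2" "dist U Ubar \<le> \<delta> / 2" "0 \<le> s" "s \<le> \<delta> / 2"
    have "L1 * s * \<bar>\<alpha>\<bar> \<le> max L1 L2 * s * \<bar>\<alpha>\<bar>" "L2 * s * \<bar>\<alpha>\<bar> \<le> max L1 L2 * s * \<bar>\<alpha>\<bar>"
      using \<open>0 \<le> s\<close> by (simp_all add: mult_right_mono)
    with k L1[OF small] L2[OF small]
    show "norm (Phi k \<alpha> U s - Phi k \<alpha> U 0) \<le> max L1 L2 * s * \<bar>\<alpha>\<bar>" by auto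
  qed
qed

lemma Phi0_origin:
  assumes "\<delta> > 0" "wave_curves \<gamma> ainf \<delta> lam r Phi" "dist U Ubar < \<delta>"
  shows "Phi0 Phi 0 0 U = U"
  using wave_curvesD(2)[OF assms(2), of 1 U 0] wave_curvesD(2)[OF assms(2), of 2 U 0] assms
  by (simp add: Phi0_def)

lemma Phi0_on_axis:
  assumes "\<delta> > 0" "wave_curves \<gamma> ainf \<delta> lam r Phi" "k \<in> {1, 2}"
    and "dist U Ubar < \<delta>" "dist (Phi 1 b U 0) Ubar < \<delta>"
  shows "Phi0 Phi (if k = 1 then b else 0) (if k = 2 then b else 0) U = Phi k b U 0"
  using wave_curvesD(2)[OF assms(2), of 1 U 0] wave_curvesD(2)[OF assms(2), of 2 "Phi 1 b U 0" 0] assms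
  by (auto simp: Phi0_def)

lemma composite_coordinates_estimates:
  assumes "\<delta> > 0" "char_fields \<gamma> ainf \<delta> lam r" "wave_curves \<gamma> ainf \<delta> lam r Phi"
  obtains \<epsilon> C where "\<epsilon> > 0" "C > 0"
    "\<And>U k \<alpha> \<beta>1 \<beta>2 s. dist U Ubar < \<epsilon> \<Longrightarrow> k \<in> {1, 2} \<Longrightarrow> \<bar>\<alpha>\<bar> < \<epsilon> \<Longrightarrow>
       \<bar>\<beta>1\<bar> < \<epsilon> \<Longrightarrow> \<bar>\<beta>2\<bar> < \<epsilon> \<Longrightarrow> 0 \<le> s \<Longrightarrow> s \<le> \<epsilon> \<Longrightarrow>
       Phi0 Phi \<beta>1 \<beta>2 U = Phi k \<alpha> U s \<Longrightarrow>
       \<bar>\<beta>1 - (if k = 1 then \<alpha> else 0)\<bar> + \<bar>\<beta>2 - (if k = 2 then \<alpha> else 0)\<bar> \<le> C * \<bar>\<alpha>\<bar> * s"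
    "\<And>U \<beta>1 \<beta>2. dist U Ubar < \<epsilon> \<Longrightarrow> \<bar>\<beta>1\<bar> < \<epsilon> \<Longrightarrow> \<bar>\<beta>2\<bar> < \<epsilon> \<Longrightarrow>
       \<bar>\<beta>1\<bar> + \<bar>\<beta>2\<bar> \<le> C * norm (Phi0 Phi \<beta>1 \<beta>2 U - U)"
proof -
  obtain \<epsilon>1 c where "\<epsilon>1 > 0" "c > 0" and inv: "\<And>U b1 b2 b1' b2'. dist U Ubar < \<epsilon>1 \<Longrightarrow>
      \<bar>b1\<bar> < \<epsilon>1 \<Longrightarrow> \<bar>b2\<bar> < \<epsilon>1 \<Longrightarrow> \<bar>b1'\<bar> < \<epsilon>1 \<Longrightarrow> \<bar>b2'\<bar> < \<epsilon>1 \<Longrightarrow>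
      c * (\<bar>b1 - b1'\<bar> + \<bar>b2 - b2'\<bar>) \<le> norm (Phi0 Phi b1 b2 U - Phi0 Phi b1' b2' U)"
    by (metis composite_wave_curve_inverse_lipschitz[OF assms])
  obtain L where "L \<ge> 0" and pert: "\<And>k \<alpha> U s. k \<in> {1, 2} \<Longrightarrow>
      \<bar>\<alpha>\<bar> \<le> \<delta> / 2 \<Longrightarrow> dist U Ubar \<le> \<delta> / 2 \<Longrightarrow> 0 \<le> s \<Longrightarrow> s \<le> \<delta> / 2 \<Longrightarrow>
      norm (Phi k \<alpha> U s - Phi k \<alpha> U 0) \<le> L * s * \<bar>\<alpha>\<bar>"
    by (metis wave_curves_tau_lipschitz[OF assms(1,3)])
  obtain \<epsilon>2 where "\<epsilon>2 > 0" and
    near: "\<And>a V. \<bar>a\<bar> < \<epsilon>2 \<Longrightarrow> dist V Ubar < \<epsilon>2 \<Longrightarrow> dist (Phi 1 a V 0) Ubar < \<delta>"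
    using wave_curve_stays_near[OF assms(1,3) _ assms(1), of 1] by auto
  define \<epsilon> C where "\<epsilon> = min (min \<epsilon>1 \<epsilon>2) (\<delta> / 2)" and "C = (L + 1) / c"
  have cC: "c * C = L + 1" using \<open>c > 0\<close> by (simp add: C_def)
  show ?thesis
  proof (rule that)
    show "\<epsilon> > 0" "C > 0"
      using \<open>\<epsilon>1 > 0\<close> \<open>\<epsilon>2 > 0\<close> \<open>\<delta> > 0\<close> \<open>c > 0\<close> \<open>L \<ge> 0\<close> by (simp_all add: \<epsilon>_def C_def)
  next
    fix U k \<alpha> \<beta>1 \<beta>2 s
    assume small: "dist U Ubar < \<epsilon>" "k \<in> {1, 2}" "\<bar>\<alpha>\<bar> < \<epsilon>" "\<bar>\<beta>1\<bar> < \<epsilon>" "\<bar>\<beta>2\<bar> < \<epsilon>"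
      and s: "0 \<le> s" "s \<le> \<epsilon>" and on_curve: "Phi0 Phi \<beta>1 \<beta>2 U = Phi k \<alpha> U s"
    define b1 b2 where "b1 = (if k = 1 then \<alpha> else 0)" and "b2 = (if k = 2 then \<alpha> else 0)"
    have "c * (\<bar>\<beta>1 - b1\<bar> + \<bar>\<beta>2 - b2\<bar>) \<le> norm (Phi0 Phi \<beta>1 \<beta>2 U - Phi0 Phi b1 b2 U)"
      using inv[of U \<beta>1 \<beta>2 b1 b2] small \<open>\<epsilon>1 > 0\<close> by (simp add: \<epsilon>_def b1_def b2_def)
    also have "\<dots> = norm (Phi k \<alpha> U s - Phi k \<alpha> U 0)"
      using Phi0_on_axis[OF assms(1,3)] near \<open>\<delta> > 0\<close> small on_curve
      by (simp add: \<epsilon>_def b1_def b2_def)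
    also have "\<dots> \<le> L * s * \<bar>\<alpha>\<bar>"
      using pert[of k \<alpha> U s] small s by (simp add: \<epsilon>_def)
    also have "\<dots> \<le> (L + 1) * (\<bar>\<alpha>\<bar> * s)"
      using s by (simp add: algebra_simps)
    also have "\<dots> = c * (C * \<bar>\<alpha>\<bar> * s)"
      by (metis cC mult.assoc)
    finally show "\<bar>\<beta>1 - b1\<bar> + \<bar>\<beta>2 - b2\<bar> \<le> C * \<bar>\<alpha>\<bar> * s"
      by (rule mult_left_le_imp_le[OF _ \<open>c > 0\<close>])
  next
    fix U \<beta>1 \<beta>2
    assume small: "dist U Ubar < \<epsilon>" "\<bar>\<beta>1\<bar> < \<epsilon>" "\<bar>\<beta>2\<bar> < \<epsilon>"
    have "c * (\<bar>\<beta>1\<bar> + \<bar>\<beta>2\<bar>) \<le> norm (Phi0 Phi \<beta>1 \<beta>2 U - U)"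
      using inv[of U \<beta>1 \<beta>2 0 0] Phi0_origin[OF assms(1,3)] small \<open>\<epsilon>1 > 0\<close> \<open>\<delta> > 0\<close>
      by (simp add: \<epsilon>_def)
    also have "\<dots> \<le> (L + 1) * norm (Phi0 Phi \<beta>1 \<beta>2 U - U)"
      using \<open>L \<ge> 0\<close> by (simp add: algebra_simps)
    also have "\<dots> = c * (C * norm (Phi0 Phi \<beta>1 \<beta>2 U - U))"
      by (metis cC mult.assoc)
    finally show "\<bar>\<beta>1\<bar> + \<bar>\<beta>2\<bar> \<le> C * norm (Phi0 Phi \<beta>1 \<beta>2 U - U)"
      by (rule mult_left_le_imp_le[OF _ \<open>c > 0\<close>])
  qed
qed

theorem proposition3p1:
  fixes \<gamma> ainf \<delta> :: real
    and lam :: "nat \<Rightarrow> real \<times> real \<Rightarrow> real \<Rightarrow> real"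
    and r :: "nat \<Rightarrow> real \<times> real \<Rightarrow> real \<Rightarrow> real \<times> real"
    and Phi :: "nat \<Rightarrow> real \<Rightarrow> real \<times> real \<Rightarrow> real \<Rightarrow> real \<times> real"
  assumes "\<gamma> > 1" and "ainf > 0" and "\<delta> > 0"
    and "char_fields \<gamma> ainf \<delta> lam r"
    and "wave_curves \<gamma> ainf \<delta> lam r Phi"
  shows "\<exists>\<epsilon> \<tau>1 C. \<epsilon> > 0 \<and> \<tau>1 > 0 \<and> C > 0 \<and>
    (\<forall>\<tau> UL UR. 0 < \<tau> \<and> \<tau> < \<tau>1 \<and> dist UL Ubar < \<epsilon> \<and> dist UR Ubar < \<epsilon> \<longrightarrow>
      (\<forall>k\<in>{1::nat,2}. \<forall>\<alpha>k \<beta>1 \<beta>2.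
          \<bar>\<alpha>k\<bar> < \<epsilon> \<and> \<bar>\<beta>1\<bar> < \<epsilon> \<and> \<bar>\<beta>2\<bar> < \<epsilon> \<and>
          UR = Phi0 Phi \<beta>1 \<beta>2 UL \<and> UR = Phi k \<alpha>k UL (\<tau>^2) \<longrightarrow>
            \<bar>\<beta>1 - (if k = 1 then \<alpha>k else 0)\<bar> \<le> C * \<bar>\<alpha>k\<bar> * \<tau>^2 \<and>
            \<bar>\<beta>2 - (if k = 2 then \<alpha>k else 0)\<bar> \<le> C * \<bar>\<alpha>k\<bar> * \<tau>^2) \<and>
      (\<forall>\<beta>1 \<beta>2. \<bar>\<beta>1\<bar> < \<epsilon> \<and> \<bar>\<beta>2\<bar> < \<epsilon> \<and> UR = Phi0 Phi \<beta>1 \<beta>2 UL \<longrightarrow>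
          \<bar>\<beta>1\<bar> \<le> C * norm (UR - UL) \<and> \<bar>\<beta>2\<bar> \<le> C * norm (UR - UL)))"
proof -
  obtain \<epsilon> C where "\<epsilon> > 0" "C > 0" and along_curve: "\<And>U k \<alpha> \<beta>1 \<beta>2 s.
      dist U Ubar < \<epsilon> \<Longrightarrow> k \<in> {1, 2} \<Longrightarrow> \<bar>\<alpha>\<bar> < \<epsilon> \<Longrightarrow> \<bar>\<beta>1\<bar> < \<epsilon> \<Longrightarrow> \<bar>\<beta>2\<bar> < \<epsilon> \<Longrightarrow>
      0 \<le> s \<Longrightarrow> s \<le> \<epsilon> \<Longrightarrow> Phi0 Phi \<beta>1 \<beta>2 U = Phi k \<alpha> U s \<Longrightarrow>
      \<bar>\<beta>1 - (if k = 1 then \<alpha> else 0)\<bar> + \<bar>\<beta>2 - (if k = 2 then \<alpha> else 0)\<bar> \<le> C * \<bar>\<alpha>\<bar> * s"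
    and bounded: "\<And>U \<beta>1 \<beta>2. dist U Ubar < \<epsilon> \<Longrightarrow> \<bar>\<beta>1\<bar> < \<epsilon> \<Longrightarrow> \<bar>\<beta>2\<bar> < \<epsilon> \<Longrightarrow>
      \<bar>\<beta>1\<bar> + \<bar>\<beta>2\<bar> \<le> C * norm (Phi0 Phi \<beta>1 \<beta>2 U - U)"
    by (metis composite_coordinates_estimates[OF assms(3-5)])
  have part_a: "\<bar>\<beta>1 - (if k = 1 then \<alpha> else 0)\<bar> \<le> C * \<bar>\<alpha>\<bar> * \<tau>^2 \<and>
      \<bar>\<beta>2 - (if k = 2 then \<alpha> else 0)\<bar> \<le> C * \<bar>\<alpha>\<bar> * \<tau>^2"
    if "0 < \<tau>" "\<tau> < min 1 \<epsilon>" "dist UL Ubar < \<epsilon>" "k \<in> {1, 2}" "\<bar>\<alpha>\<bar> < \<epsilon>" "\<bar>\<beta>1\<bar> < \<epsilon>"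
      "\<bar>\<beta>2\<bar> < \<epsilon>" "UR = Phi0 Phi \<beta>1 \<beta>2 UL" "UR = Phi k \<alpha> UL (\<tau>^2)" for \<tau> UL UR k \<alpha> \<beta>1 \<beta>2
  proof -
    have "\<tau> * \<tau> \<le> 1 * \<tau>" using that(1,2) by (intro mult_right_mono) auto
    with that(2) have "\<tau>^2 \<le> \<epsilon>" by (simp add: power2_eq_square)
    with along_curve[of UL k \<alpha> \<beta>1 \<beta>2 "\<tau>^2"] that
    have "\<bar>\<beta>1 - (if k = 1 then \<alpha> else 0)\<bar> + \<bar>\<beta>2 - (if k = 2 then \<alpha> else 0)\<bar> \<le> C * \<bar>\<alpha>\<bar> * \<tau>^2"
      by simp
    then show ?thesis
      using abs_ge_zero[of "\<beta>1 - (if k = 1 then \<alpha> else 0)"] abs_ge_zero[of "\<beta>2 - (if k = 2 then \<alpha> else 0)"]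
      by linarith
  qed
  have part_b: "\<bar>\<beta>1\<bar> \<le> C * norm (UR - UL) \<and> \<bar>\<beta>2\<bar> \<le> C * norm (UR - UL)"
    if "dist UL Ubar < \<epsilon>" "\<bar>\<beta>1\<bar> < \<epsilon>" "\<bar>\<beta>2\<bar> < \<epsilon>" "UR = Phi0 Phi \<beta>1 \<beta>2 UL" for UL UR \<beta>1 \<beta>2
    using bounded[OF that(1-3)] abs_ge_zero[of \<beta>1] abs_ge_zero[of \<beta>2] unfolding that(4) by linarith
  have pos: "\<epsilon> > 0" "min 1 \<epsilon> > 0" "C > 0" using \<open>\<epsilon> > 0\<close> \<open>C > 0\<close> by simp_all
  show ?thesis
    by (rule exI[of _ \<epsilon>], rule exI[of _ "min 1 \<epsilon>"], rule exI[of _ C],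
        intro conjI pos allI impI ballI; elim conjE) (meson part_a part_b)+
qed

end
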